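(* For every $k\in\mathbb N$, \[ xC_{k+1}=\frac{x\star(xC_ky)-(xC_ky)\star x}{q-q^{-1}},\qquad C_{k+1}y=\frac{(xC_ky)\star y-y\star(xC_ky)}{q-q^{-1}}, \] where $xC_{k+1}$, $C_{k+1}y$, $xC_ky$ denote free (concatenation) products in $\mathbb V$.
   Context: $\mathbb F$ is a field of characteristic zero and $q\in\mathbb F$ is nonzero and not a root of unity; $[n]_q=(q^n-q^{-n})/(q-q^{-1})$. $\mathbb V$ is the free algebra on noncommuting letters $x,y$; a word is a product of letters (the empty word is $1$), and words form a basis. The $q$-shuffle product $\star$ on $\mathbb V$ is the bilinear product with $1\star v=v\star 1=v$ and, for nontrivial words $u=u_1\cdots u_r$, $v=v_1\cdots v_s$ (letters $u_i,v_j$), $u\star v=u_1\bigl((u_2\cdots u_r)\star v\bigr)+v_1\bigl(u\star(v_2\cdots v_s)\bigr)q^{(u_1,v_1)+(u_2,v_1)+\cdots+(u_r,v_1)}$, where juxtaposition is concatenation and $(x,x)=(y,y)=2$, $(x,y)=(y,x)=-2$. Set $\overline x=1$, $\overline y=-1$. A word $u_1\cdots u_n$ is Catalan if $\overline u_1+\cdots+\overline u_i\ge0$ for $1\le i\le n-1$ and $=0$ for $i=n$. For $n\in\mathbb N$, $C_n=\sum u_1u_2\cdots u_{2n}\,[1]_q[1+\overline u_1]_q[1+\overline u_1+\overline u_2]_q\cdots[1+\overline u_1+\cdots+\overline u_{2n}]_q$, summed over all Catalan words of length $2n$ (so $C_0=1$). *)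

theory Defs
  imports Main
begin

text \<open>An element of V is represented by its coefficient function on words
  (elements of V are those with finite support; all operations below
  only use finitely many coefficients per output word).\<close>

datatype letter = X | Y

type_synonym word = "letter list"

definition pair :: "letter \<Rightarrow> letter \<Rightarrow> int" where
  "pair a b = (if a = b then 2 else -2)"

definition wd :: "word \<Rightarrow> word \<Rightarrow> 'a::field" where
  "wd u = (\<lambda>w. if w = u then 1 else 0)"

definition prep :: "letter \<Rightarrow> (word \<Rightarrow> 'a::field) \<Rightarrow> word \<Rightarrow> 'a" where
  "prep a f w = (case w of [] \<Rightarrow> 0 | c # w' \<Rightarrow> if c = a then f w' else 0)"

fun qsh :: "'a::field \<Rightarrow> word \<Rightarrow> word \<Rightarrow> word \<Rightarrow> 'a" where
  "qsh q [] v = wd v"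
| "qsh q (a # u) [] = wd (a # u)"
| "qsh q (a # u) (b # v) =
     (\<lambda>w. prep a (qsh q u (b # v)) w
        + q powi (pair a b + sum_list (map (\<lambda>c. pair c b) u)) * prep b (qsh q (a # u) v) w)"

text \<open>Bilinear extension: q-shuffle product on V.  Only pairs of words whose
  lengths add up to the length of w can contribute to the coefficient of w.\<close>
definition qshuffle :: "'a::field \<Rightarrow> (word \<Rightarrow> 'a) \<Rightarrow> (word \<Rightarrow> 'a) \<Rightarrow> word \<Rightarrow> 'a" where
  "qshuffle q f g w =
     (\<Sum>(u, v) \<in> {(u, v). length u + length v = length w}. f u * g v * qsh q u v w)"

definition conc :: "(word \<Rightarrow> 'a::field) \<Rightarrow> (word \<Rightarrow> 'a) \<Rightarrow> word \<Rightarrow> 'a" where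
  "conc f g w = (\<Sum>i\<le>length w. f (take i w) * g (drop i w))"

definition bar :: "letter \<Rightarrow> int" where
  "bar a = (if a = X then 1 else -1)"

definition psum :: "word \<Rightarrow> nat \<Rightarrow> int" where
  "psum w i = sum_list (map bar (take i w))"

definition catalan :: "word \<Rightarrow> bool" where
  "catalan w \<longleftrightarrow> (\<forall>i. 1 \<le> i \<and> i \<le> length w - 1 \<longrightarrow> psum w i \<ge> 0) \<and> psum w (length w) = 0"

definition qint :: "'a::field \<Rightarrow> int \<Rightarrow> 'a" where
  "qint q n = (q powi n - q powi (- n)) / (q - inverse q)"

definition Cn :: "'a::field \<Rightarrow> nat \<Rightarrow> word \<Rightarrow> 'a" where
  "Cn q n w = (if length w = 2 * n \<and> catalan w
                then (\<Prod>i = 0..2 * n. qint q (1 + psum w i)) else 0)"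

end

theory Submission
  imports Defs
begin

text \<open>Shuffling a letter a into a word inserts it at every position, with weight
  q^(a, letters before) on the left and q^(letters after, a) on the right.  Hence, at a
  word w, the commutator of a with an element g supported on words of height 0 is the sum,
  over the positions i with w_i = a, of g(w without its i-th letter) times
  [2 abar h_i]_q, h_i being the height of w before position i.  For g = x C_k y only words
  w = x s y contribute, and both identities reduce to identities for the path weights
  prod_i [c + h_i]_q of s, proved by induction on s (appending one letter) from
  [n+1][n+2] = [n+1][n] + [2n+2].\<close>

lemma qint_zero [simp]: "qint q 0 = 0"
  by (simp add: qint_def)

lemma qint_one: "q - inverse q \<noteq> 0 \<Longrightarrow> qint q 1 = 1"
  by (simp add: qint_def)

lemma qint_uminus: "qint q (- n) = - qint q n"
  unfolding qint_def by (metis divide_minus_left minus_diff_eq minus_minus)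

lemma qint_double:
  fixes q :: "'a::field"
  assumes "q \<noteq> 0"
  shows "qint q (2 * m) = qint q m * (q powi m + q powi (- m))"
proof -
  have "q powi (2 * m) = q powi m * q powi m" "q powi (- (2 * m)) = q powi (- m) * q powi (- m)"
    using assms power_int_add[of q m m] power_int_add[of q "- m" "- m"] by simp_all
  then show ?thesis
    unfolding qint_def by (simp add: square_diff_square_factored mult.commute)
qed

lemma qint_succ_sub_pred:
  fixes q :: "'a::field"
  assumes "q \<noteq> 0" "q - inverse q \<noteq> 0"
  shows "qint q (n + 1) - qint q (n - 1) = q powi n + q powi (- n)"
proof -
  have succ: "q powi (m + 1) = q powi m * q" for m
    using assms(1) by (simp add: power_int_add)
  have pred: "q powi (m - 1) = q powi m * inverse q" for m
    using succ[of "m - 1"] assms(1) by (simp add: field_simps)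
  have "q powi (- (n + 1)) = q powi (- n) * inverse q"
    using pred[of "- n"] by (simp only: minus_add_distrib diff_conv_add_uminus)
  moreover have "q powi (- (n - 1)) = q powi (- n) * q"
    using succ[of "- n"] by simp
  ultimately have "(q powi (n + 1) - q powi (- (n + 1))) - (q powi (n - 1) - q powi (- (n - 1)))
      = (q powi n * q - q powi (- n) * inverse q) - (q powi n * inverse q - q powi (- n) * q)"
    using succ[of n] pred[of n] by simp
  also have "\<dots> = (q powi n + q powi (- n)) * (q - inverse q)"
    by (simp add: algebra_simps)
  finally show ?thesis
    using assms(2) by (simp add: qint_def diff_divide_distrib[symmetric])
qed

lemma qint_succ_mult_succ_succ:
  fixes q :: "'a::field"
  assumes "q \<noteq> 0" "q - inverse q \<noteq> 0"
  shows "qint q (n + 1) * qint q (n + 2) = qint q (n + 1) * qint q n + qint q (2 * n + 2)"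
proof -
  have "qint q (n + 2) - qint q n = q powi (n + 1) + q powi (- (n + 1))"
    using qint_succ_sub_pred[OF assms, of "n + 1"] by (simp add: add.assoc)
  moreover have "qint q (2 * n + 2) = qint q (n + 1) * (q powi (n + 1) + q powi (- (n + 1)))"
    using qint_double[OF assms(1), of "n + 1"] by (simp add: algebra_simps)
  ultimately show ?thesis
    by (simp add: algebra_simps)
qed

instance letter :: finite
proof
  have "(UNIV :: letter set) = {X, Y}"
    using letter.exhaust by auto
  then show "finite (UNIV :: letter set)"
    by (metis finite.emptyI finite.insertI)
qed

lemma finite_word_pairs_length: "finite {(u :: word, v :: word). length u + length v = n}"
proof (rule finite_subset)
  show "{(u :: word, v :: word). length u + length v = n}
      \<subseteq> {u. set u \<subseteq> UNIV \<and> length u \<le> n} \<times> {v. set v \<subseteq> UNIV \<and> length v \<le> n}"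
    by auto
qed (intro finite_cartesian_product finite_lists_length_le; simp)

lemma finite_words_length: "finite {v :: word. length v = n}"
  using finite_lists_length_eq[of "UNIV :: letter set" n] by simp

lemma bar_X [simp]: "bar X = 1"
  and bar_Y [simp]: "bar Y = -1"
  by (simp_all add: bar_def)

definition height :: "word \<Rightarrow> int" where
  "height v = sum_list (map bar v)"

lemma height_Nil [simp]: "height [] = 0"
  and height_Cons [simp]: "height (a # v) = bar a + height v"
  and height_append [simp]: "height (u @ v) = height u + height v"
  by (simp_all add: height_def)

text \<open>Only for balanced g do the two q-shuffles of g with a letter combine into
  q-integers.\<close>
definition balanced :: "(word \<Rightarrow> 'a::zero) \<Rightarrow> bool" where
  "balanced f \<longleftrightarrow> (\<forall>v. f v \<noteq> 0 \<longrightarrow> height v = 0)"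

lemma psum_eq_height_take: "psum w i = height (take i w)"
  by (simp add: psum_def height_def)

lemma psum_0 [simp]: "psum w 0 = 0"
  by (simp add: psum_def)

lemma psum_Cons_Suc [simp]: "psum (a # w) (Suc i) = bar a + psum w i"
  by (simp add: psum_def)

lemma psum_length [simp]: "psum w (length w) = height w"
  by (simp add: psum_eq_height_take)

lemma psum_Suc: "psum w (Suc i) = psum w i + (if i < length w then bar (w ! i) else 0)"
  by (simp add: psum_def take_Suc_conv_app_nth)

lemma psum_append: "i \<le> length s \<Longrightarrow> psum (s @ t) i = psum s i"
  by (simp add: psum_def)

lemma psum_reaches_minus_one: "psum w i < 0 \<Longrightarrow> \<exists>j\<le>i. psum w j = -1"
proof (induction i)
  case (Suc i)
  show ?case
  proof (cases "psum w i < 0")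
    case True
    then show ?thesis
      using Suc.IH le_Suc_eq by blast
  next
    case False
    then have "psum w (Suc i) = -1"
      using Suc.prems by (simp add: psum_Suc bar_def split: if_splits)
    then show ?thesis
      by blast
  qed
qed simp

lemma pair_eq_bar_mult: "pair a c = 2 * bar a * bar c"
  by (cases a; cases c) (simp_all add: pair_def bar_def)

lemma sum_pair_right: "sum_list (map (\<lambda>c. pair c a) v) = 2 * bar a * height v"
  by (induction v) (simp_all add: pair_eq_bar_mult algebra_simps)

definition insert_at :: "nat \<Rightarrow> letter \<Rightarrow> word \<Rightarrow> word" where
  "insert_at i a v = take i v @ a # drop i v"

definition delete_at :: "nat \<Rightarrow> word \<Rightarrow> word" where
  "delete_at i w = take i w @ drop (Suc i) w"

lemma insert_at_0 [simp]: "insert_at 0 a v = a # v"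
  and insert_at_Suc_Cons [simp]: "insert_at (Suc i) a (b # v) = b # insert_at i a v"
  by (simp_all add: insert_at_def)

lemma length_delete_at [simp]: "i < length w \<Longrightarrow> length (delete_at i w) = length w - 1"
  by (simp add: delete_at_def)

lemma take_delete_at [simp]: "i < length w \<Longrightarrow> take i (delete_at i w) = take i w"
  by (simp add: delete_at_def)

lemma drop_delete_at [simp]: "i < length w \<Longrightarrow> drop i (delete_at i w) = drop (Suc i) w"
  by (simp add: delete_at_def)

lemma height_delete_at:
  "i < length w \<Longrightarrow> height (delete_at i w) = psum w i + height (drop (Suc i) w)"
  by (simp add: delete_at_def psum_eq_height_take)

lemma height_delete_at_eq_diff:
  assumes "j < length s"
  shows "height (delete_at j s) = height s - bar (s ! j)"
proof -
  have "height s = height (take j s @ s ! j # drop (Suc j) s)"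
    by (simp only: id_take_nth_drop[OF assms, symmetric])
  then show ?thesis
    by (simp add: delete_at_def)
qed

lemma delete_at_snoc: "j < length s \<Longrightarrow> delete_at j (s @ [c]) = delete_at j s @ [c]"
  by (simp add: delete_at_def)

lemma delete_at_length_snoc [simp]: "delete_at (length s) (s @ [c]) = s"
  by (simp add: delete_at_def)

lemma insert_at_eq_iff:
  assumes "i < length w" "Suc (length v) = length w"
  shows "w = insert_at i a v \<longleftrightarrow> w ! i = a \<and> v = delete_at i w"
proof
  assume "w = insert_at i a v"
  moreover have "i \<le> length v"
    using assms by simp
  ultimately show "w ! i = a \<and> v = delete_at i w"
    by (simp add: insert_at_def delete_at_def nth_append min_def)
next
  assume "w ! i = a \<and> v = delete_at i w"
  then show "w = insert_at i a v"
    using id_take_nth_drop[OF assms(1)] assms(1) by (simp add: insert_at_def)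
qed

lemma sum_insertions_eq_sum_deletions:
  "(\<Sum>v | Suc (length v) = length w. \<Sum>i\<le>length v. if w = insert_at i a v then f v i else 0)
   = (\<Sum>i<length w. if w ! i = a then f (delete_at i w) i else (0 :: 'b :: comm_monoid_add))"
proof -
  let ?V = "{v :: word. Suc (length v) = length w}"
  have V: "finite ?V"
    using finite_words_length[of "length w - 1"]
    by (rule finite_subset[rotated]) auto
  have "(\<Sum>v\<in>?V. \<Sum>i\<le>length v. if w = insert_at i a v then f v i else 0)
      = (\<Sum>v\<in>?V. \<Sum>i<length w. if w = insert_at i a v then f v i else 0)"
    by (intro sum.cong refl) (auto simp: lessThan_Suc_atMost[symmetric])
  also have "\<dots> = (\<Sum>i<length w. \<Sum>v\<in>?V. if w = insert_at i a v then f v i else 0)"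
    by (rule sum.swap)
  also have "\<dots> = (\<Sum>i<length w. \<Sum>v\<in>?V. if v = delete_at i w then
                    (if w ! i = a then f v i else 0) else 0)"
    by (intro sum.cong refl) (simp add: insert_at_eq_iff)
  also have "\<dots> = (\<Sum>i<length w. if w ! i = a then f (delete_at i w) i else 0)"
    using V by (intro sum.cong refl) (auto simp: sum.delta')
  finally show ?thesis .
qed

lemma prep_wd [simp]: "prep b (wd v) = wd (b # v)"
  by (auto simp: prep_def wd_def split: list.split)

lemma prep_sum_indicator:
  "prep b (\<lambda>w. \<Sum>i\<in>I. if w = u i then f i else 0) w = (\<Sum>i\<in>I. if w = b # u i then f i else 0)"
  by (cases w) (auto simp: prep_def)

lemma qsh_letter_left:
  fixes q :: "'a::field"
  assumes "q \<noteq> 0"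
  shows "qsh q [a] v w
    = (\<Sum>i\<le>length v. if w = insert_at i a v then q powi (2 * bar a * psum v i) else 0)"
proof (induction v arbitrary: w)
  case Nil
  then show ?case
    by (simp add: wd_def)
next
  case (Cons b v)
  have "qsh q [a] v
      = (\<lambda>w. \<Sum>i\<le>length v. if w = insert_at i a v then q powi (2 * bar a * psum v i) else 0)"
    using Cons.IH by blast
  then have "qsh q [a] (b # v) w = wd (a # b # v) w + (\<Sum>i\<le>length v.
      if w = b # insert_at i a v then q powi (pair a b) * q powi (2 * bar a * psum v i) else 0)"
    by (simp add: prep_sum_indicator sum_distrib_left if_distrib cong: if_cong)
  moreover have "q powi (2 * bar a * (bar b + psum v i))
      = q powi (pair a b) * q powi (2 * bar a * psum v i)" for i
    using assms by (simp add: pair_eq_bar_mult power_int_add algebra_simps)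
  ultimately show ?case
    unfolding length_Cons sum.atMost_Suc_shift by (simp add: wd_def cong: if_cong)
qed

lemma qsh_letter_right:
  fixes q :: "'a::field"
  shows "qsh q v [a] w = (\<Sum>i\<le>length v.
    if w = insert_at i a v then q powi (2 * bar a * height (drop i v)) else 0)"
proof (induction v arbitrary: w)
  case Nil
  then show ?case
    by (simp add: wd_def)
next
  case (Cons b v)
  have "qsh q v [a] = (\<lambda>w. \<Sum>i\<le>length v.
      if w = insert_at i a v then q powi (2 * bar a * height (drop i v)) else 0)"
    using Cons.IH by blast
  moreover have "pair b a + sum_list (map (\<lambda>c. pair c a) v) = 2 * bar a * height (b # v)"
    by (simp add: sum_pair_right) (simp add: pair_eq_bar_mult algebra_simps)
  ultimately have "qsh q (b # v) [a] w = (\<Sum>i\<le>length v.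
      if w = b # insert_at i a v then q powi (2 * bar a * height (drop i v)) else 0)
      + q powi (2 * bar a * height (b # v)) * wd (a # b # v) w"
    by (simp add: prep_sum_indicator del: height_Cons)
  then show ?case
    unfolding length_Cons sum.atMost_Suc_shift by (simp add: wd_def del: height_Cons cong: if_cong)
qed

lemma qshuffle_letter_left_sum_words:
  "qshuffle q (wd [a]) g w = (\<Sum>v | Suc (length v) = length w. g v * qsh q [a] v w)"
proof -
  let ?F = "\<lambda>(u, v). wd [a] u * g v * qsh q u v w"
  have "qshuffle q (wd [a]) g w = sum ?F {(u, v). length u + length v = length w}"
    by (simp add: qshuffle_def)
  also have "\<dots> = sum ?F ((\<lambda>v. ([a], v)) ` {v. Suc (length v) = length w})"
    by (rule sum.mono_neutral_right[OF finite_word_pairs_length]) (auto simp: wd_def)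
  also have "\<dots> = (\<Sum>v | Suc (length v) = length w. ?F ([a], v))"
    by (simp add: sum.reindex inj_on_def)
  finally show ?thesis
    by (simp add: wd_def)
qed

lemma qshuffle_letter_right_sum_words:
  "qshuffle q g (wd [a]) w = (\<Sum>v | Suc (length v) = length w. g v * qsh q v [a] w)"
proof -
  let ?F = "\<lambda>(u, v). g u * wd [a] v * qsh q u v w"
  have "qshuffle q g (wd [a]) w = sum ?F {(u, v). length u + length v = length w}"
    by (simp add: qshuffle_def)
  also have "\<dots> = sum ?F ((\<lambda>v. (v, [a])) ` {v. Suc (length v) = length w})"
    by (rule sum.mono_neutral_right[OF finite_word_pairs_length]) (auto simp: wd_def)
  also have "\<dots> = (\<Sum>v | Suc (length v) = length w. ?F (v, [a]))"
    by (simp add: sum.reindex inj_on_def)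
  finally show ?thesis
    by (simp add: wd_def)
qed

lemma qshuffle_letter_left:
  fixes q :: "'a::field"
  assumes "q \<noteq> 0"
  shows "qshuffle q (wd [a]) g w
    = (\<Sum>i<length w. if w ! i = a then g (delete_at i w) * q powi (2 * bar a * psum w i) else 0)"
proof -
  have "qshuffle q (wd [a]) g w = (\<Sum>v | Suc (length v) = length w. \<Sum>i\<le>length v.
      if w = insert_at i a v then g v * q powi (2 * bar a * psum v i) else 0)"
    unfolding qshuffle_letter_left_sum_words qsh_letter_left[OF assms]
    by (simp add: sum_distrib_left if_distrib cong: if_cong)
  also have "\<dots> = (\<Sum>i<length w. if w ! i = a then
      g (delete_at i w) * q powi (2 * bar a * psum (delete_at i w) i) else 0)"
    by (rule sum_insertions_eq_sum_deletions)
  also have "\<dots> = (\<Sum>i<length w. if w ! i = a then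
      g (delete_at i w) * q powi (2 * bar a * psum w i) else 0)"
    by (intro sum.cong refl) (simp add: psum_eq_height_take)
  finally show ?thesis .
qed

lemma qshuffle_letter_right:
  fixes q :: "'a::field"
  shows "qshuffle q g (wd [a]) w
    = (\<Sum>i<length w. if w ! i = a
        then g (delete_at i w) * q powi (2 * bar a * height (drop (Suc i) w)) else 0)"
proof -
  have "qshuffle q g (wd [a]) w = (\<Sum>v | Suc (length v) = length w. \<Sum>i\<le>length v.
      if w = insert_at i a v then g v * q powi (2 * bar a * height (drop i v)) else 0)"
    unfolding qshuffle_letter_right_sum_words qsh_letter_right
    by (simp add: sum_distrib_left if_distrib cong: if_cong)
  also have "\<dots> = (\<Sum>i<length w. if w ! i = a then
      g (delete_at i w) * q powi (2 * bar a * height (drop i (delete_at i w))) else 0)"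
    by (rule sum_insertions_eq_sum_deletions)
  also have "\<dots> = (\<Sum>i<length w. if w ! i = a then
      g (delete_at i w) * q powi (2 * bar a * height (drop (Suc i) w)) else 0)"
    by (intro sum.cong refl) simp
  finally show ?thesis .
qed

lemma qshuffle_letter_commutator:
  fixes q :: "'a::field"
  assumes "q \<noteq> 0" and "balanced g"
  shows "(qshuffle q (wd [a]) g w - qshuffle q g (wd [a]) w) / (q - inverse q)
    = (\<Sum>i<length w. if w ! i = a then g (delete_at i w) * qint q (2 * bar a * psum w i) else 0)"
  unfolding qshuffle_letter_left[OF assms(1)] qshuffle_letter_right
    sum_subtractf[symmetric] sum_divide_distrib
proof (rule sum.cong[OF refl])
  fix i assume "i \<in> {..<length w}"
  moreover have "height (delete_at i w) = 0" if "g (delete_at i w) \<noteq> 0"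
    using assms(2) that by (simp add: balanced_def)
  ultimately have "height (drop (Suc i) w) = - psum w i" if "g (delete_at i w) \<noteq> 0"
    using that by (simp add: height_delete_at)
  then show "((if w ! i = a then g (delete_at i w) * q powi (2 * bar a * psum w i) else 0)
      - (if w ! i = a then g (delete_at i w) * q powi (2 * bar a * height (drop (Suc i) w)) else 0))
      / (q - inverse q)
    = (if w ! i = a then g (delete_at i w) * qint q (2 * bar a * psum w i) else 0)"
    by (cases "g (delete_at i w) = 0") (simp_all add: qint_def right_diff_distrib)
qed

lemma conc_wd_left: "conc (wd [a]) f = prep a f"
proof
  fix w
  show "conc (wd [a]) f w = prep a f w"
  proof (cases w)
    case (Cons c r)
    have "conc (wd [a]) f w = (\<Sum>i\<le>Suc (length r). wd [a] (take i w) * f (drop i w))"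
      by (simp add: conc_def Cons)
    also have "\<dots> = wd [a] [] * f w + (\<Sum>i\<le>length r. wd [a] (c # take i r) * f (drop i r))"
      by (subst sum.atMost_Suc_shift) (simp add: Cons)
    also have "(\<Sum>i\<le>length r. wd [a] (c # take i r) * f (drop i r))
        = (\<Sum>i\<le>length r. if i = 0 then (if c = a then f r else 0) else 0)"
      by (rule sum.cong) (auto simp: wd_def)
    finally show ?thesis
      by (simp add: wd_def prep_def Cons)
  qed (simp add: conc_def wd_def prep_def)
qed

lemma conc_wd_right: "conc f (wd [a]) w = (if w \<noteq> [] \<and> last w = a then f (butlast w) else 0)"
proof (cases w rule: rev_cases)
  case (snoc r c)
  have "conc f (wd [a]) w = (\<Sum>i\<le>length r. f (take i (r @ [c])) * wd [a] (drop i (r @ [c])))"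
    by (simp add: conc_def snoc wd_def)
  also have "\<dots> = (\<Sum>i\<le>length r. if i = length r then (if c = a then f r else 0) else 0)"
    by (rule sum.cong) (auto simp: wd_def)
  finally show ?thesis
    by (simp add: snoc)
qed (simp add: conc_def wd_def)

lemma conc_frame_apply [simp]: "conc (wd [a]) (conc f (wd [b])) (a # t @ [b]) = f t"
  by (simp add: conc_wd_left conc_wd_right prep_def)

lemma conc_frame_nonzero:
  assumes "conc (wd [a]) (conc f (wd [b])) v \<noteq> 0"
  obtains t where "v = a # t @ [b]" and "f t \<noteq> 0"
proof -
  obtain r where "v = a # r" "r \<noteq> []" "last r = b" "f (butlast r) \<noteq> 0"
    using assms by (auto simp: conc_wd_left conc_wd_right prep_def split: list.splits if_splits)
  then show thesis
    using that[of "butlast r"] by (metis append_butlast_last_id)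
qed

lemma balanced_conc_frame:
  assumes "balanced f"
  shows "balanced (conc (wd [X]) (conc f (wd [Y])))"
  unfolding balanced_def
proof (intro allI impI)
  fix v
  assume "conc (wd [X]) (conc f (wd [Y])) v \<noteq> 0"
  then obtain t where "v = X # t @ [Y]" "f t \<noteq> 0"
    by (rule conc_frame_nonzero)
  then show "height v = 0"
    using assms by (simp add: balanced_def)
qed

definition path_weight :: "'a::field \<Rightarrow> int \<Rightarrow> word \<Rightarrow> 'a" where
  "path_weight q c v = (\<Prod>i = 0..length v. qint q (c + psum v i))"

lemma path_weight_Nil [simp]: "path_weight q c [] = qint q c"
  by (simp add: path_weight_def)

lemma path_weight_snoc:
  "path_weight q c (s @ [a]) = path_weight q c s * qint q (c + height s + bar a)"
proof -
  have "path_weight q c (s @ [a])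
      = (\<Prod>i = 0..length s. qint q (c + psum (s @ [a]) i))
        * qint q (c + psum (s @ [a]) (Suc (length s)))"
    by (simp add: path_weight_def)
  also have "(\<Prod>i = 0..length s. qint q (c + psum (s @ [a]) i)) = path_weight q c s"
    unfolding path_weight_def by (rule prod.cong) (auto simp: psum_append)
  finally show ?thesis
    by (simp add: psum_eq_height_take add.assoc)
qed

lemma path_weight_Cons: "path_weight q c (a # s) = qint q c * path_weight q (c + bar a) s"
  unfolding path_weight_def length_Cons prod.atLeast0_atMost_Suc_shift
  by (simp add: add.assoc)

lemma path_weight_eq_0: "i \<le> length v \<Longrightarrow> c + psum v i = 0 \<Longrightarrow> path_weight q c v = 0"
  unfolding path_weight_def by (rule prod_zero) (auto intro!: bexI[of _ i])

text \<open>The Catalan condition is implied by the nonvanishing of the weight: a path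
  that goes below 0 reaches -1, where the factor is [0]_q = 0.\<close>
lemma Cn_eq_path_weight:
  "Cn q k t = (if length t = 2 * k \<and> height t = 0 then path_weight q 1 t else 0)"
proof (cases "length t = 2 * k \<and> height t = 0")
  case True
  show ?thesis
  proof (cases "catalan t")
    case False
    then obtain i where "i \<le> length t - 1" "psum t i < 0"
      using True psum_length[of t] unfolding catalan_def by (auto simp: not_le)
    then obtain j where "j \<le> length t" "psum t j = -1"
      using psum_reaches_minus_one by (meson diff_le_self le_trans)
    then have "path_weight q 1 t = 0"
      by (intro path_weight_eq_0) auto
    then show ?thesis
      using False by (simp add: Cn_def)
  qed (use True in \<open>simp add: Cn_def path_weight_def\<close>)
qed (auto simp: Cn_def catalan_def)

lemma balanced_Cn: "balanced (Cn q k)"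
  by (simp add: balanced_def Cn_eq_path_weight)

lemma Cn_Suc_nonzero_framed:
  assumes "Cn q (Suc k) v \<noteq> 0"
  shows "\<exists>t. v = X # t @ [Y]"
proof -
  have len: "length v = 2 * Suc k" and "height v = 0" and weight: "path_weight q 1 v \<noteq> 0"
    using assms by (simp_all add: Cn_eq_path_weight split: if_splits)
  obtain a u where v: "v = a # u"
    using len by (cases v) auto
  obtain t b where u: "u = t @ [b]"
    using len v by (cases u rule: rev_cases) auto
  have "a = X"
  proof (rule ccontr)
    assume "a \<noteq> X"
    then have "path_weight q 1 v = qint q 1 * path_weight q 0 u"
      by (simp add: v path_weight_Cons bar_def)
    also have "path_weight q 0 u = 0"
      by (rule path_weight_eq_0[of 0]) simp_all
    finally show False
      using weight by simp
  qed
  moreover have "b = Y"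
  proof (rule ccontr)
    assume "b \<noteq> Y"
    then have "b = X"
      by (cases b) simp_all
    then have "height (a # t) = -1"
      using \<open>height v = 0\<close> by (simp add: v u bar_def)
    then have "path_weight q 1 (a # t) = 0"
      by (intro path_weight_eq_0[of "length (a # t)"]) simp_all
    then show False
      using weight path_weight_snoc[of q 1 "a # t" b] by (simp add: v u)
  qed
  ultimately show ?thesis
    using v u by blast
qed

text \<open>At the word x s y, the commutator of the letter a with x C_k y, divided by
  q - q^-1, is deletion_sum q a s if s has length 2k+1 and height abar, and 0 otherwise
  (frame_deletion_sum_framed and Cn_deletion_sum).\<close>
definition deletion_sum :: "'a::field \<Rightarrow> letter \<Rightarrow> word \<Rightarrow> 'a" where
  "deletion_sum q a s = (\<Sum>j<length s. if s ! j = a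
     then path_weight q 1 (delete_at j s) * qint q (2 + 2 * psum s j) else 0)"

lemma deletion_sum_Nil [simp]: "deletion_sum q a [] = 0"
  by (simp add: deletion_sum_def)

lemma deletion_sum_snoc:
  "deletion_sum q a (s @ [c]) = qint q (1 + height s - bar a + bar c) * deletion_sum q a s
     + (if c = a then path_weight q 1 s * qint q (2 + 2 * height s) else 0)"
proof -
  have "(if (s @ [c]) ! j = a
        then path_weight q 1 (delete_at j (s @ [c])) * qint q (2 + 2 * psum (s @ [c]) j) else 0)
      = qint q (1 + height s - bar a + bar c)
        * (if s ! j = a then path_weight q 1 (delete_at j s) * qint q (2 + 2 * psum s j) else 0)"
    if "j < length s" for j
    using that by (simp add: nth_append delete_at_snoc path_weight_snoc height_delete_at_eq_diff
        psum_append add_diff_eq)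
  then show ?thesis
    by (simp add: deletion_sum_def sum_distrib_left nth_append psum_append)
qed

lemma deletion_sum_X:
  fixes q :: "'a::field"
  assumes "q \<noteq> 0" "q - inverse q \<noteq> 0"
  shows "deletion_sum q X s = path_weight q 1 s * qint q (height s)"
proof (induction s rule: rev_induct)
  case (snoc c s)
  define b where "b = height s"
  show ?case
  proof (cases c)
    case X
    have "deletion_sum q X (s @ [c])
        = qint q (b + 1) * deletion_sum q X s + path_weight q 1 s * qint q (2 * b + 2)"
      by (simp add: X deletion_sum_snoc bar_def b_def algebra_simps)
    also have "\<dots> = path_weight q 1 s * (qint q (b + 1) * qint q b + qint q (2 * b + 2))"
      by (simp add: snoc.IH b_def algebra_simps)
    also have "\<dots> = path_weight q 1 s * (qint q (b + 1) * qint q (b + 2))"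
      by (simp only: qint_succ_mult_succ_succ[OF assms])
    also have "\<dots> = path_weight q 1 (s @ [c]) * qint q (height (s @ [c]))"
      by (simp add: X path_weight_snoc bar_def b_def algebra_simps)
    finally show ?thesis .
  next
    case Y
    then show ?thesis
      by (simp add: deletion_sum_snoc snoc.IH path_weight_snoc bar_def algebra_simps)
  qed
qed simp

lemma deletion_sum_Y:
  fixes q :: "'a::field"
  assumes "q \<noteq> 0" "q - inverse q \<noteq> 0"
  shows "deletion_sum q Y s = path_weight q 2 s - path_weight q 1 s * qint q (height s + 2)"
proof (induction s rule: rev_induct)
  case Nil
  show ?case
    using qint_one[OF assms(2)] by simp
next
  case (snoc c s)
  define b where "b = height s"
  show ?case
  proof (cases c)
    case X
    then show ?thesis
      by (simp add: deletion_sum_snoc snoc.IH path_weight_snoc bar_def algebra_simps)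
  next
    case Y
    have "deletion_sum q Y (s @ [c])
        = qint q (b + 1) * deletion_sum q Y s + path_weight q 1 s * qint q (2 * b + 2)"
      by (simp add: Y deletion_sum_snoc bar_def b_def algebra_simps)
    also have "\<dots> = qint q (b + 1) * path_weight q 2 s
        - path_weight q 1 s * (qint q (b + 1) * qint q (b + 2) - qint q (2 * b + 2))"
      by (simp add: snoc.IH b_def algebra_simps)
    also have "\<dots> = qint q (b + 1) * path_weight q 2 s
        - path_weight q 1 s * (qint q (b + 1) * qint q b)"
      by (simp only: qint_succ_mult_succ_succ[OF assms] add_diff_cancel_right')
    also have "\<dots> = path_weight q 2 (s @ [c])
        - path_weight q 1 (s @ [c]) * qint q (height (s @ [c]) + 2)"
      by (simp add: Y path_weight_snoc bar_def b_def algebra_simps)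
    finally show ?thesis .
  qed
qed

lemma insert_into_frame:
  assumes "p \<noteq> []" "r \<noteq> []" "p @ r = a # t @ [b]"
  shows "\<exists>s. p @ m # r = a # s @ [b]"
proof -
  obtain p' where "p = a # p'"
    using assms(1,3) by (cases p) auto
  moreover obtain r' where "r = r' @ [b]"
    using assms(2,3) by (cases r rule: rev_cases) auto
  ultimately show ?thesis
    by auto
qed

text \<open>The terms at the two ends vanish since the partial sum there is 0; deleting an
  inner letter keeps the first and last letter.\<close>
lemma frame_deletion_term_eq_0:
  assumes "balanced f"
    and unframed: "\<nexists>s. w = X # s @ [Y]" and "i < length w"
  shows "conc (wd [X]) (conc f (wd [Y])) (delete_at i w) * qint q (2 * psum w i) = 0"
proof (rule ccontr)
  assume "conc (wd [X]) (conc f (wd [Y])) (delete_at i w) * qint q (2 * psum w i) \<noteq> 0"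
  then have nonzero: "conc (wd [X]) (conc f (wd [Y])) (delete_at i w) \<noteq> 0" and "psum w i \<noteq> 0"
    by auto
  obtain t where t: "take i w @ drop (Suc i) w = X # t @ [Y]"
    using nonzero by (rule conc_frame_nonzero) (simp add: delete_at_def)
  have "i \<noteq> 0"
    using \<open>psum w i \<noteq> 0\<close> by (metis psum_0)
  moreover have "Suc i \<noteq> length w"
  proof
    assume "Suc i = length w"
    then have "psum w i = height (delete_at i w)"
      by (simp add: delete_at_def psum_eq_height_take)
    then show False
      using balanced_conc_frame[OF assms(1)] nonzero \<open>psum w i \<noteq> 0\<close> by (simp add: balanced_def)
  qed
  ultimately have "\<exists>s. take i w @ w ! i # drop (Suc i) w = X # s @ [Y]"
    using \<open>i < length w\<close> t by (intro insert_into_frame) auto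
  then show False
    using unframed id_take_nth_drop[OF \<open>i < length w\<close>] by auto
qed

lemma frame_deletion_sum_unframed:
  assumes "balanced f" and "\<nexists>s. w = X # s @ [Y]"
  shows "(\<Sum>i<length w. if w ! i = a
      then conc (wd [X]) (conc f (wd [Y])) (delete_at i w) * qint q (2 * psum w i) else 0) = 0"
  using frame_deletion_term_eq_0[OF assms] by (intro sum.neutral) simp

lemma frame_deletion_sum_framed:
  fixes s :: word
  assumes "balanced f"
  defines "w \<equiv> X # s @ [Y]"
  shows "(\<Sum>i<length w. if w ! i = a
      then conc (wd [X]) (conc f (wd [Y])) (delete_at i w) * qint q (2 * psum w i) else 0)
    = (\<Sum>j<length s. if s ! j = a then f (delete_at j s) * qint q (2 + 2 * psum s j) else 0)"
proof -
  let ?F = "conc (wd [X]) (conc f (wd [Y]))"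
  let ?term = "\<lambda>i. if w ! i = a then ?F (delete_at i w) * qint q (2 * psum w i) else 0"
  have last: "?term (Suc (length s)) = 0"
  proof -
    have "delete_at (Suc (length s)) w = X # s" "psum w (Suc (length s)) = height (X # s)"
      by (simp_all add: w_def delete_at_def psum_append)
    then show ?thesis
      using balanced_conc_frame[OF assms(1)]
      by (cases "?F (X # s) = 0") (simp_all add: balanced_def del: height_Cons)
  qed
  have inner:
    "?term (Suc j) = (if s ! j = a then f (delete_at j s) * qint q (2 + 2 * psum s j) else 0)"
    if "j < length s" for j
  proof -
    have "delete_at (Suc j) w = X # delete_at j s @ [Y]"
      using that by (simp add: w_def delete_at_def)
    then show ?thesis
      using that by (simp add: w_def nth_append psum_append bar_def)
  qed
  have "length w = Suc (Suc (length s))"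
    by (simp add: w_def)
  then have "(\<Sum>i<length w. ?term i)
      = ?term 0 + (\<Sum>j<length s. ?term (Suc j)) + ?term (Suc (length s))"
    by (simp only: sum.lessThan_Suc_shift[of ?term "Suc (length s)"]
        sum.lessThan_Suc[of "\<lambda>j. ?term (Suc j)" "length s"] add.assoc)
  also have "\<dots>
      = (\<Sum>j<length s. if s ! j = a then f (delete_at j s) * qint q (2 + 2 * psum s j) else 0)"
    using last inner by simp
  finally show ?thesis .
qed

lemma Cn_deletion_sum:
  "(\<Sum>j<length s. if s ! j = a then Cn q k (delete_at j s) * qint q (2 + 2 * psum s j) else 0)
    = (if length s = 2 * k + 1 \<and> height s = bar a then deletion_sum q a s else 0)"
  by (auto simp: deletion_sum_def Cn_eq_path_weight height_delete_at_eq_diff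
      intro!: sum.cong sum.neutral)

lemma conc_X_Cn_Suc_eq_commutator:
  fixes q :: "'a::field" and k :: nat
  assumes q: "q \<noteq> 0" "q - inverse q \<noteq> 0"
  defines "F \<equiv> conc (wd [X]) (conc (Cn q k) (wd [Y]))"
  shows "conc (wd [X]) (Cn q (Suc k)) w
    = (qshuffle q (wd [X]) F w - qshuffle q F (wd [X]) w) / (q - inverse q)"
proof -
  have balanced: "balanced F"
    unfolding F_def by (rule balanced_conc_frame[OF balanced_Cn])
  have "(qshuffle q (wd [X]) F w - qshuffle q F (wd [X]) w) / (q - inverse q)
      = (\<Sum>i<length w. if w ! i = X then F (delete_at i w) * qint q (2 * psum w i) else 0)"
    using qshuffle_letter_commutator[OF q(1) balanced, of X]
    by (simp cong: if_cong)
  also have "\<dots> = prep X (Cn q (Suc k)) w"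
  proof (cases "\<exists>s. w = X # s @ [Y]")
    case True
    then obtain s where w: "w = X # s @ [Y]"
      by blast
    have "(\<Sum>i<length w. if w ! i = X then F (delete_at i w) * qint q (2 * psum w i) else 0)
        = (if length s = 2 * k + 1 \<and> height s = 1 then deletion_sum q X s else 0)"
      unfolding w F_def
      by (subst frame_deletion_sum_framed[OF balanced_Cn])
        (rule Cn_deletion_sum[of s X q k, unfolded bar_X])
    moreover have "path_weight q 1 (s @ [Y]) = deletion_sum q X s" if "height s = 1"
      using that qint_one[OF q(2)] by (simp add: deletion_sum_X[OF q] path_weight_snoc)
    ultimately show ?thesis
      by (simp add: w prep_def Cn_eq_path_weight)
  next
    case False
    have "prep X (Cn q (Suc k)) w = 0"
    proof (rule ccontr)
      assume "prep X (Cn q (Suc k)) w \<noteq> 0"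
      then obtain v where v: "w = X # v" "Cn q (Suc k) v \<noteq> 0"
        by (auto simp: prep_def split: list.splits if_splits)
      then obtain t where "v = X # t @ [Y]"
        using Cn_Suc_nonzero_framed by blast
      then have "w = X # (X # t) @ [Y]"
        using v by simp
      then show False
        using False by blast
    qed
    then show ?thesis
      unfolding F_def using frame_deletion_sum_unframed[OF balanced_Cn False] by simp
  qed
  finally show ?thesis
    by (simp add: conc_wd_left)
qed

lemma conc_Cn_Suc_Y_eq_commutator:
  fixes q :: "'a::field" and k :: nat
  assumes q: "q \<noteq> 0" "q - inverse q \<noteq> 0"
  defines "F \<equiv> conc (wd [X]) (conc (Cn q k) (wd [Y]))"
  shows "conc (Cn q (Suc k)) (wd [Y]) w
    = (qshuffle q F (wd [Y]) w - qshuffle q (wd [Y]) F w) / (q - inverse q)"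
proof -
  have balanced: "balanced F"
    unfolding F_def by (rule balanced_conc_frame[OF balanced_Cn])
  have "(qshuffle q F (wd [Y]) w - qshuffle q (wd [Y]) F w) / (q - inverse q)
      = - ((qshuffle q (wd [Y]) F w - qshuffle q F (wd [Y]) w) / (q - inverse q))"
    by (simp add: minus_divide_left)
  also have "\<dots> = (\<Sum>i<length w.
      - (if w ! i = Y then F (delete_at i w) * qint q (- (2 * psum w i)) else 0))"
    using qshuffle_letter_commutator[OF q(1) balanced, of Y]
    by (simp add: sum_negf cong: if_cong)
  also have "\<dots> = (\<Sum>i<length w. if w ! i = Y then F (delete_at i w) * qint q (2 * psum w i) else 0)"
    by (intro sum.cong) (simp_all add: qint_uminus)
  also have "\<dots> = (if w \<noteq> [] \<and> last w = Y then Cn q (Suc k) (butlast w) else 0)"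
  proof (cases "\<exists>s. w = X # s @ [Y]")
    case True
    then obtain s where w: "w = X # s @ [Y]"
      by blast
    have "path_weight q 1 s = 0" if "height s = -1"
      using that by (intro path_weight_eq_0[of "length s"]) simp_all
    then have "path_weight q 1 (X # s) = deletion_sum q Y s" if "height s = -1"
      using that qint_one[OF q(2)] by (simp add: deletion_sum_Y[OF q] path_weight_Cons)
    moreover have "(\<Sum>i<length w. if w ! i = Y then F (delete_at i w) * qint q (2 * psum w i) else 0)
        = (if length s = 2 * k + 1 \<and> height s = -1 then deletion_sum q Y s else 0)"
      unfolding w F_def
      by (subst frame_deletion_sum_framed[OF balanced_Cn])
        (rule Cn_deletion_sum[of s Y q k, unfolded bar_Y])
    ultimately show ?thesis
      by (simp add: w Cn_eq_path_weight butlast_append)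
  next
    case False
    have "(if w \<noteq> [] \<and> last w = Y then Cn q (Suc k) (butlast w) else 0) = 0"
    proof (rule ccontr)
      assume "(if w \<noteq> [] \<and> last w = Y then Cn q (Suc k) (butlast w) else 0) \<noteq> 0"
      then have w: "w = butlast w @ [Y]" and "Cn q (Suc k) (butlast w) \<noteq> 0"
        by (auto split: if_splits) (metis append_butlast_last_id)
      then obtain t where "butlast w = X # t @ [Y]"
        using Cn_Suc_nonzero_framed by blast
      then have "w = X # (t @ [Y]) @ [Y]"
        using w by simp
      then show False
        using False by blast
    qed
    then show ?thesis
      unfolding F_def using frame_deletion_sum_unframed[OF balanced_Cn False] by simp
  qed
  finally show ?thesis
    by (simp add: conc_wd_right)
qed

theorem lemma7p3:
  fixes q :: "'a::field_char_0" and k :: nat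
  assumes "q \<noteq> 0" and "\<forall>n::nat. n > 0 \<longrightarrow> q ^ n \<noteq> 1"
  shows "conc (wd [X]) (Cn q (Suc k))
           = (\<lambda>w. (qshuffle q (wd [X]) (conc (wd [X]) (conc (Cn q k) (wd [Y]))) w
                 - qshuffle q (conc (wd [X]) (conc (Cn q k) (wd [Y]))) (wd [X]) w) / (q - inverse q))
       \<and> conc (Cn q (Suc k)) (wd [Y])
           = (\<lambda>w. (qshuffle q (conc (wd [X]) (conc (Cn q k) (wd [Y]))) (wd [Y]) w
                 - qshuffle q (wd [Y]) (conc (wd [X]) (conc (Cn q k) (wd [Y]))) w) / (q - inverse q))"
proof -
  have "q - inverse q \<noteq> 0"
  proof
    assume "q - inverse q = 0"
    then have "q ^ 2 = 1"
      using assms(1) by (simp add: field_simps power2_eq_square)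
    then show False
      using assms(2) by auto
  qed
  with assms(1) show ?thesis
    by (simp add: fun_eq_iff conc_X_Cn_Suc_eq_commutator conc_Cn_Suc_Y_eq_commutator)
qed

end
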